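(* Let $C\subseteq\{0,1\}^m$ be a code, let $C'\subseteq C$ with $\mathrm{CL}(C')=\ell$, and let $T=\mathrm{Supp}(C')$. Then $\mathrm{CL}(C|_{\bar T})\le \mathrm{CL}(C)-\ell$.
   Context: For $S\subseteq[m]$, $C|_S=\{c|_S : c\in C\}\subseteq\{0,1\}^S$, and $\bar T=[m]\setminus T$. $\mathrm{Supp}(C')=\{i\in[m] : \exists c\in C',\ c_i\neq 0\}$. A chain of length $\ell$ in a code $D\subseteq\{0,1\}^A$ is a pair of injective maps $a:[\ell]\to A$ and $c:[\ell]\to D$ such that $c(i)_{a(i)}=1$ for all $i$, and $c(i)_{a(j)}=0$ for all $1\le i<j\le\ell$; the chain length $\mathrm{CL}(D)$ is the maximum length of a chain in $D$ ($0$ if none exists). *)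

theory Defs
  imports Main
begin

text \<open>Binary words indexed by a set A of coordinates (subset of nat) are represented as
  functions nat => bool that are False outside A (True = 1, False = 0).\<close>

definition cube :: "nat set \<Rightarrow> (nat \<Rightarrow> bool) set" where
  "cube A = {c. \<forall>i. c i \<longrightarrow> i \<in> A}"

definition restr :: "nat set \<Rightarrow> (nat \<Rightarrow> bool) set \<Rightarrow> (nat \<Rightarrow> bool) set" where
  "restr S C = (\<lambda>c i. i \<in> S \<and> c i) ` C"

definition Supp :: "nat set \<Rightarrow> (nat \<Rightarrow> bool) set \<Rightarrow> nat set" where
  "Supp A C' = {i \<in> A. \<exists>c\<in>C'. c i}"

definition is_chain :: "nat set \<Rightarrow> (nat \<Rightarrow> bool) set \<Rightarrow> nat \<Rightarrow> (nat \<Rightarrow> nat) \<Rightarrow> (nat \<Rightarrow> (nat \<Rightarrow> bool)) \<Rightarrow> bool" where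
  "is_chain A D l a c \<longleftrightarrow>
     inj_on a {1..l} \<and> a ` {1..l} \<subseteq> A \<and>
     inj_on c {1..l} \<and> c ` {1..l} \<subseteq> D \<and>
     (\<forall>i\<in>{1..l}. c i (a i)) \<and>
     (\<forall>i\<in>{1..l}. \<forall>j\<in>{1..l}. i < j \<longrightarrow> \<not> c i (a j))"

text \<open>Chain length: maximum length of a chain (0 if none; the empty chain always exists).\<close>
definition CL :: "nat set \<Rightarrow> (nat \<Rightarrow> bool) set \<Rightarrow> nat" where
  "CL A D = Max {l. \<exists>a c. is_chain A D l a c}"

end

theory Submission
  imports Defs
begin

text \<open>Take a longest chain of \<open>C'\<close> and a longest chain of \<open>C|\<^sub>B\<close>, where \<open>B\<close> is the
  complement of \<open>T = Supp C'\<close>. Each word of the second chain is the restriction of a word of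
  \<open>C\<close>, and since its pivot coordinates lie in \<open>B\<close>, replacing it by that word keeps it a chain.
  Every word of \<open>C'\<close> vanishes on \<open>B\<close>, so the chain of \<open>C'\<close> followed by the lifted chain is
  a chain of \<open>C\<close> of length \<open>\<ell> + CL(C|\<^sub>B)\<close>.\<close>

lemma is_chain_length_le_card:
  assumes "finite A" "is_chain A D l a c"
  shows "l \<le> card A"
proof -
  have "card (a ` {1..l}) = l" "a ` {1..l} \<subseteq> A"
    using assms(2) unfolding is_chain_def by (simp_all add: card_image)
  then show ?thesis using assms(1) card_mono by metis
qed

lemma is_chain_empty: "is_chain A D 0 a c"
  unfolding is_chain_def by simp

lemma finite_chain_lengths:
  assumes "finite A"
  shows "finite {l. \<exists>a c. is_chain A D l a c}"
  by (rule finite_subset[of _ "{..card A}"]) (auto dest: is_chain_length_le_card[OF assms])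

lemma CL_attained:
  assumes "finite A"
  obtains a c where "is_chain A D (CL A D) a c"
proof -
  have "CL A D \<in> {l. \<exists>a c. is_chain A D l a c}"
    unfolding CL_def using finite_chain_lengths[OF assms] by (intro Max_in) (auto intro: is_chain_empty)
  then show ?thesis using that by blast
qed

lemma is_chain_le_CL:
  assumes "finite A" "is_chain A D l a c"
  shows "l \<le> CL A D"
  unfolding CL_def using finite_chain_lengths[OF assms(1)] assms(2) by (intro Max_ge) auto

lemma is_chain_mono:
  assumes "is_chain A D l a c" "A \<subseteq> A'" "D \<subseteq> D'"
  shows "is_chain A' D' l a c"
  using assms unfolding is_chain_def by blast

lemma is_chain_restr_lift:
  assumes "is_chain B (restr B C) k a c"
  obtains d where "is_chain B C k a d"
proof -
  have "\<forall>j\<in>{1..k}. \<exists>x\<in>C. c j = (\<lambda>i. i \<in> B \<and> x i)"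
    using assms unfolding is_chain_def restr_def by blast
  then obtain d where d: "\<And>j. j \<in> {1..k} \<Longrightarrow> d j \<in> C \<and> c j = (\<lambda>i. i \<in> B \<and> d j i)"
    by metis
  have "inj_on d {1..k}"
    using assms d unfolding is_chain_def inj_on_def by metis
  moreover have "a j \<in> B" if "j \<in> {1..k}" for j
    using assms that unfolding is_chain_def by blast
  ultimately have "is_chain B C k a d"
    using assms d unfolding is_chain_def by (auto simp: image_subset_iff)
  then show ?thesis using that by blast
qed

lemma inj_on_append_shift:
  fixes l k :: nat
  assumes "inj_on f {1..l}" "inj_on g {1..k}" "f ` {1..l} \<inter> g ` {1..k} = {}"
  shows "inj_on (\<lambda>i. if i \<le> l then f i else g (i - l)) {1..l + k}"
proof (rule inj_onI)
  fix x y
  assume x: "x \<in> {1..l + k}" and y: "y \<in> {1..l + k}"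
    and eq: "(if x \<le> l then f x else g (x - l)) = (if y \<le> l then f y else g (y - l))"
  have shift: "i - l \<in> {1..k}" if "i \<in> {1..l + k}" "\<not> i \<le> l" for i
    using that by auto
  show "x = y"
  proof (cases "x \<le> l"; cases "y \<le> l")
    assume "x \<le> l" "y \<le> l"
    then show ?thesis using x y eq assms(1) by (auto dest: inj_onD)
  next
    assume "x \<le> l" "\<not> y \<le> l"
    then have "f x \<in> f ` {1..l}" "f x \<in> g ` {1..k}"
      using x eq shift[OF y] by (auto intro: rev_image_eqI)
    with assms(3) show ?thesis by blast
  next
    assume "\<not> x \<le> l" "y \<le> l"
    then have "f y \<in> f ` {1..l}" "f y \<in> g ` {1..k}"
      using y eq shift[OF x] by (auto intro: rev_image_eqI)
    with assms(3) show ?thesis by blast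
  next
    assume "\<not> x \<le> l" "\<not> y \<le> l"
    then have "x - l = y - l" using eq assms(2) shift[OF x] shift[OF y] by (auto dest: inj_onD)
    with \<open>\<not> x \<le> l\<close> \<open>\<not> y \<le> l\<close> show ?thesis by simp
  qed
qed

text \<open>No disjointness of the two pivot or word sequences is assumed: it follows from the
  cross condition, because \<open>c2 j (a2 j)\<close> holds.\<close>

lemma is_chain_append:
  assumes ch1: "is_chain A D l a1 c1" and ch2: "is_chain A D k a2 c2"
    and cross: "\<And>i j. i \<in> {1..l} \<Longrightarrow> j \<in> {1..k} \<Longrightarrow> \<not> c1 i (a2 j)"
  shows "is_chain A D (l + k) (\<lambda>i. if i \<le> l then a1 i else a2 (i - l))
                              (\<lambda>i. if i \<le> l then c1 i else c2 (i - l))"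
    (is "is_chain A D (l + k) ?a ?c")
proof -
  have shift: "i - l \<in> {1..k}" if "i \<in> {1..l + k}" "\<not> i \<le> l" for i
    using that by auto
  have disjoint: "a1 ` {1..l} \<inter> a2 ` {1..k} = {}" "c1 ` {1..l} \<inter> c2 ` {1..k} = {}"
    using ch1 ch2 cross unfolding is_chain_def by fastforce+
  have inj1: "inj_on a1 {1..l}" "inj_on c1 {1..l}" and inj2: "inj_on a2 {1..k}" "inj_on c2 {1..k}"
    using ch1 ch2 unfolding is_chain_def by blast+
  have inj: "inj_on ?a {1..l + k}" "inj_on ?c {1..l + k}"
    by (fact inj_on_append_shift[OF inj1(1) inj2(1) disjoint(1)],
        fact inj_on_append_shift[OF inj1(2) inj2(2) disjoint(2)])
  have range: "?a ` {1..l + k} \<subseteq> A" "?c ` {1..l + k} \<subseteq> D"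
    using ch1 ch2 shift unfolding is_chain_def by (fastforce simp: image_subset_iff)+
  have diag: "?c i (?a i)" if "i \<in> {1..l + k}" for i
    using ch1 ch2 shift[OF that] that unfolding is_chain_def by auto
  have upper: "\<not> ?c i (?a j)" if "i \<in> {1..l + k}" "j \<in> {1..l + k}" "i < j" for i j
  proof (cases "j \<le> l")
    case True
    then show ?thesis using ch1 that unfolding is_chain_def by auto
  next
    case False
    then have "i - l < j - l \<or> i \<le> l" using \<open>i < j\<close> by linarith
    then show ?thesis using ch2 cross shift False that unfolding is_chain_def by auto
  qed
  show ?thesis
    unfolding is_chain_def using inj range diag upper by blast
qed

theorem mainTheorem5:
  fixes m l :: nat and C C' :: "(nat \<Rightarrow> bool) set"
  assumes "C \<subseteq> cube {1..m}"
    and "C' \<subseteq> C"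
    and "CL {1..m} C' = l"
  shows "CL ({1..m} - Supp {1..m} C') (restr ({1..m} - Supp {1..m} C') C) + l \<le> CL {1..m} C"
proof -
  define B where "B = {1..m} - Supp {1..m} C'"
  define k where "k = CL B (restr B C)"
  obtain a1 c1 where ch1: "is_chain {1..m} C' l a1 c1"
    using CL_attained[of "{1..m}" C'] assms(3) by auto
  obtain a2 c2 where "is_chain B (restr B C) k a2 c2"
    using CL_attained[of B "restr B C"] unfolding k_def B_def by auto
  then obtain d where ch2: "is_chain B C k a2 d"
    by (rule is_chain_restr_lift)
  have cross: "\<not> c1 i (a2 j)" if "i \<in> {1..l}" "j \<in> {1..k}" for i j
  proof -
    have "c1 i \<in> C'" "a2 j \<in> B"
      using ch1 ch2 that unfolding is_chain_def by auto
    then show ?thesis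
      unfolding B_def Supp_def by blast
  qed
  have "is_chain {1..m} C l a1 c1" "is_chain {1..m} C k a2 d"
    using is_chain_mono[OF ch1 subset_refl assms(2)] is_chain_mono[OF ch2 _ subset_refl]
    unfolding B_def by auto
  from is_chain_append[OF this cross]
  have "l + k \<le> CL {1..m} C"
    by (rule is_chain_le_CL[OF finite_atLeastAtMost])
  then show ?thesis
    unfolding k_def B_def by simp
qed

end
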